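(* Assume Hypotheses 1, 2 and 3 (see context). For any $x\in\Gamma$ and each $\mathbf{z}\in\mathbb{R}^m$, the set $T(x)\cap\mathcal{I}(\mathbf{z})$ contains exactly one point.
   Context: System $\dot x=F(x)$ with $F=(f,g)$, i.e. $\dot a=f(a,z)$, $\dot z=g(a,z)$, $(a,z)\in\mathbb{R}^n\times\mathbb{R}^m$, $X=\mathbb{R}^n\times\mathbb{R}^m$, flow $\Phi(t,x)$. Euclidean inner product, norm, operator norm. $\mathcal{L}(x_1,x_2)=\|a_2-a_1\|^2-\|z_2-z_1\|^2$, $\mathcal{C}(x)=\{x'\in X:\mathcal{L}(x',x)\ge0\}$, $\mathbf{0}$ the zero vector of $X$; $\Pi(a,z)=a$, $\Pi_\perp(a,z)=z$; $\mathbb{B}_d(x)=\{(a',z'):\|a'-a\|\le d,\|z'-z\|\le d\}$. $\Gamma\subseteq U$ positively invariant means $\Phi(t,x)$ is defined for all $t\ge0$ for $x\in\Gamma$ and $\Phi(t,\Gamma)\subseteq\Gamma$. Hypothesis 1: $U$ open and convex, and there is $d>0$ with $\mathcal{C}(x)\cap U\subset\mathbb{B}_d(x)$ for all $x\in U$. Hypothesis 2: $f,g$ are $C^1$ on $U$; there exist continuous $\alpha>0$, $\ell\ge0$ on $U$ and $c_1>0$ with, for all $x\in U$: $\langle a',D_af(x)a'\rangle\ge\alpha(x)\|a'\|^2$; $\langle z',D_zg(x)z'\rangle\le\ell(x)\|z'\|^2$; $\alpha(x)\ge\ell(x)+\|D_zf(x)\|+\|D_ag(x)\|+c_1$. Hypothesis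 3: $\Gamma\subset U$ is positively invariant and $\Pi_\perp(\Gamma)=\Pi_\perp(U)$. For $x\in\Gamma$, $Q(t,x)$ ($t\ge0$) denotes the fundamental matrix solution of the variational equation $\dot{\mathbf{x}}=DF(\Phi(t,x))\mathbf{x}$ with $Q(0,x)=I$. For $x\in\Gamma$, $T(x):=\{\mathbf{x}\in X: \mathcal{L}(Q(t,x)\mathbf{x},\mathbf{0})\le0\text{ for all }t\ge0\}$. For $\mathbf{z}\in\mathbb{R}^m$, $\mathcal{I}(\mathbf{z}):=\{(\mathbf{a},\mathbf{z}):\mathbf{a}\in\mathbb{R}^n\}$. *)

theory Defs
  imports "HOL-Analysis.Analysis"
begin

definition Lyap :: "((real^'n) \<times> (real^'m)) \<Rightarrow> ((real^'n) \<times> (real^'m)) \<Rightarrow> real" where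
  "Lyap x1 x2 = (norm (fst x2 - fst x1))\<^sup>2 - (norm (snd x2 - snd x1))\<^sup>2"

definition cone :: "((real^'n) \<times> (real^'m)) \<Rightarrow> ((real^'n) \<times> (real^'m)) set" where
  "cone x = {x'. Lyap x' x \<ge> 0}"

definition boxB :: "real \<Rightarrow> ((real^'n) \<times> (real^'m)) \<Rightarrow> ((real^'n) \<times> (real^'m)) set" where
  "boxB d x = {x'. norm (fst x' - fst x) \<le> d \<and> norm (snd x' - snd x) \<le> d}"

definition fiber :: "real^'m \<Rightarrow> ((real^'n) \<times> (real^'m)) set" where
  "fiber zz = {(aa, zz) | aa. True}"

text \<open>T(x) for a given fundamental matrix solution Q of the variational equation.\<close>
definition Tset ::
  "(real \<Rightarrow> ((real^'n) \<times> (real^'m)) \<Rightarrow> ((real^'n) \<times> (real^'m)) \<Rightarrow>\<^sub>L ((real^'n) \<times> (real^'m)))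
   \<Rightarrow> ((real^'n) \<times> (real^'m)) \<Rightarrow> ((real^'n) \<times> (real^'m)) set" where
  "Tset Q x = {v. \<forall>t\<ge>0. Lyap (blinfun_apply (Q t x) v) 0 \<le> 0}"

end

theory Submission
  imports Defs
begin

(* Write q(a, z) = |a|^2 - |z|^2, so that T(x) is the set of initial vectors v with
   q(Q t v) <= 0 for all t >= 0.  Hypothesis 2 yields, pointwise on U, the cone estimate
   2<a, Df (a,z)> - 2<z, Dg (a,z)> >= (alpha + ell + e) q(a,z) for every |e| <= c1.
   Along a solution of the variational equation this says that q(Q t v) grows at least
   like exp (integral of (alpha + ell) + e t); a Groenwall-type argument turns it into
   monotonicity of the weighted quantity exp (-(kappa t + e t)) q(Q t v), where kappa t
   is the integral of alpha + ell along the orbit up to time t.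

   From this monotonicity alone (abstracted as the predicate weighted_increasing) the two
   halves of the theorem follow by finite-dimensional linear algebra:
   - existence: for each time t one can solve fst (Q t (a, z)) = 0, because q is positive on
     (a, 0) and the weighted monotonicity makes a -> fst (Q t (a, 0)) injective; such
     solutions stay in the negative cone for earlier times and are bounded by |z|, so a
     limit point of them along t = 0, 1, 2, ... lies in T(x);
   - uniqueness: the difference of two points of T(x) on one fibre lies in the positive cone
     and is expanded at rate exp (2 c1 t) relative to the midpoint, which contradicts the
     parallelogram law for q. *)

definition qform :: "'a::real_inner \<times> 'b::real_inner \<Rightarrow> real" where
  "qform u = (norm (fst u))\<^sup>2 - (norm (snd u))\<^sup>2"

lemma Tset_iff: "v \<in> Tset Q x \<longleftrightarrow> (\<forall>t\<ge>0. qform (Q t x v) \<le> 0)"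
  unfolding Tset_def Lyap_def qform_def by simp

lemma fiber_iff: "v \<in> fiber z \<longleftrightarrow> snd v = z"
  unfolding fiber_def by (cases v) auto

lemma qform_parallelogram: "qform (u + w) + qform (u - w) = 2 * qform u + 2 * qform w"
  unfolding qform_def power2_norm_eq_inner
  by (simp add: inner_add_left inner_add_right inner_diff_left inner_diff_right inner_commute algebra_simps)

lemma qform_has_derivative:
  assumes "(p has_vector_derivative p') (at r within S)"
  shows "((\<lambda>r. qform (p r)) has_real_derivative
           2 * inner (fst (p r)) (fst p') - 2 * inner (snd (p r)) (snd p')) (at r within S)"
proof -
  have fst: "((\<lambda>r. fst (p r)) has_vector_derivative fst p') (at r within S)"
    using bounded_linear.has_vector_derivative[OF bounded_linear_fst assms] .
  have snd: "((\<lambda>r. snd (p r)) has_vector_derivative snd p') (at r within S)"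
    using bounded_linear.has_vector_derivative[OF bounded_linear_snd assms] .
  have "((\<lambda>r. inner (fst (p r)) (fst (p r)) - inner (snd (p r)) (snd (p r))) has_vector_derivative
      (inner (fst (p r)) (fst p') + inner (fst p') (fst (p r))) -
      (inner (snd (p r)) (snd p') + inner (snd p') (snd (p r)))) (at r within S)"
    by (intro has_vector_derivative_diff bounded_bilinear.has_vector_derivative[OF bounded_bilinear_inner]
        fst snd)
  then show ?thesis
    unfolding qform_def power2_norm_eq_inner
    by (simp add: has_real_derivative_iff_has_vector_derivative inner_commute)
qed

lemma cone_derivative_estimate:
  fixes F :: "('a::real_inner \<times> 'b::real_inner) \<Rightarrow>\<^sub>L 'a" and G :: "('a \<times> 'b) \<Rightarrow>\<^sub>L 'b"
  assumes F_coercive: "\<forall>a'. inner a' (F (a', 0)) \<ge> al * (norm a')\<^sup>2"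
    and G_bounded: "\<forall>z'. inner z' (G (0, z')) \<le> el * (norm z')\<^sup>2"
    and gap: "al \<ge> el + onorm (\<lambda>z'. F (0, z')) + onorm (\<lambda>a'. G (a', 0)) + c"
    and e: "\<bar>e\<bar> \<le> c"
  shows "(al + el + e) * qform (a, z) \<le> 2 * inner a (F (a, z)) - 2 * inner z (G (a, z))"
proof -
  let ?B = "onorm (\<lambda>z'. F (0, z'))" and ?C = "onorm (\<lambda>a'. G (a', 0))"
  have B_lin: "bounded_linear (\<lambda>z'. F (0, z'))" and C_lin: "bounded_linear (\<lambda>a'. G (a', 0))"
    by (auto intro!: bounded_linear_compose[OF blinfun.bounded_linear_right] bounded_linear_Pair
        bounded_linear_zero bounded_linear_ident)
  have F_split: "F (a, z) = F (a, 0) + F (0, z)" and G_split: "G (a, z) = G (a, 0) + G (0, z)"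
    by (metis add.right_neutral add_Pair blinfun.add_right add.left_neutral)+
  have cross_F: "\<bar>inner a (F (0, z))\<bar> \<le> ?B * (norm a * norm z)"
    using Cauchy_Schwarz_ineq2[of a "F (0, z)"] mult_left_mono[OF onorm[OF B_lin, of z], of "norm a"]
    by (simp add: algebra_simps)
  have cross_G: "\<bar>inner z (G (a, 0))\<bar> \<le> ?C * (norm a * norm z)"
    using Cauchy_Schwarz_ineq2[of z "G (a, 0)"] mult_left_mono[OF onorm[OF C_lin, of a], of "norm z"]
    by (simp add: algebra_simps)
  have diag: "al * (norm a)\<^sup>2 \<le> inner a (F (a, 0))" "inner z (G (0, z)) \<le> el * (norm z)\<^sup>2"
    using F_coercive G_bounded by auto
  have amgm: "2 * (norm a * norm z) \<le> (norm a)\<^sup>2 + (norm z)\<^sup>2"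
    using zero_le_power2[of "norm a - norm z"] unfolding power2_diff by linarith
  have BC: "0 \<le> ?B + ?C" using onorm_pos_le[OF B_lin] onorm_pos_le[OF C_lin] by linarith
  have "(2 * al - ?B - ?C) * (norm a)\<^sup>2 - (2 * el + ?B + ?C) * (norm z)\<^sup>2
      \<le> 2 * inner a (F (a, z)) - 2 * inner z (G (a, z))"
    using cross_F cross_G diag mult_left_mono[OF amgm BC]
    unfolding F_split G_split inner_add_right by (simp add: algebra_simps abs_le_iff)
  moreover have "(al + el + e) * qform (a, z)
      \<le> (2 * al - ?B - ?C) * (norm a)\<^sup>2 - (2 * el + ?B + ?C) * (norm z)\<^sup>2"
  proof -
    have "0 \<le> al - el - ?B - ?C - e" "0 \<le> al - el - ?B - ?C + e" using gap e by linarith+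
    then have "0 \<le> (al - el - ?B - ?C - e) * (norm a)\<^sup>2 + (al - el - ?B - ?C + e) * (norm z)\<^sup>2"
      by simp
    then show ?thesis unfolding qform_def by (simp add: algebra_simps)
  qed
  ultimately show ?thesis by linarith
qed

lemma exp_integral_weighted_increasing:
  fixes P P' w :: "real \<Rightarrow> real"
  assumes w_cont: "continuous_on {0..} w"
    and P_deriv: "\<And>r. 0 \<le> r \<Longrightarrow> (P has_real_derivative P' r) (at r within {0..})"
    and P_growth: "\<And>r. 0 \<le> r \<Longrightarrow> w r * P r \<le> P' r"
    and s: "0 \<le> s" "s \<le> t"
  shows "exp (- integral {0..s} w) * P s \<le> exp (- integral {0..t} w) * P t"
proof -
  define E where "E r = exp (- integral {0..r} w)" for r
  have EP_deriv: "((\<lambda>r. E r * P r) has_real_derivative E r * (P' r - w r * P r)) (at r within {0..t})"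
    if r: "r \<in> {0..t}" for r
  proof -
    have "((\<lambda>u. integral {0..u} w) has_real_derivative w r) (at r within {0..t})"
      using integral_has_vector_derivative[OF continuous_on_subset[OF w_cont] r]
      by (auto simp: has_real_derivative_iff_has_vector_derivative)
    then have "(E has_real_derivative - w r * E r) (at r within {0..t})"
      unfolding E_def by (auto intro!: derivative_eq_intros)
    moreover have "(P has_real_derivative P' r) (at r within {0..t})"
      using has_field_derivative_subset[OF P_deriv] r by auto
    ultimately show ?thesis
      by (auto intro: derivative_eq_intros simp: algebra_simps)
  qed
  have "E s * P s \<le> E t * P t"
  proof (rule DERIV_nonneg_imp_increasing_open[OF s(2)])
    fix r assume r: "s < r" "r < t"
    then have "r \<in> interior {0..t}" using s by auto
    then have "((\<lambda>r. E r * P r) has_real_derivative E r * (P' r - w r * P r)) (at r)"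
      using EP_deriv[of r] interior_subset at_within_interior by (metis subsetD)
    moreover have "0 \<le> E r * (P' r - w r * P r)"
      using P_growth[of r] r s unfolding E_def by simp
    ultimately show "\<exists>y. ((\<lambda>r. E r * P r) has_real_derivative y) (at r) \<and> 0 \<le> y" by blast
  next
    show "continuous_on {s..t} (\<lambda>r. E r * P r)"
      using continuous_on_subset[OF DERIV_continuous_on[OF EP_deriv]] s by auto
  qed
  then show ?thesis unfolding E_def .
qed

definition weighted_increasing ::
  "(real \<Rightarrow> real) \<Rightarrow> (real \<Rightarrow> ('a::real_inner \<times> 'b::real_inner) \<Rightarrow>\<^sub>L ('a \<times> 'b)) \<Rightarrow> bool" where
  "weighted_increasing W Q \<longleftrightarrow> W 0 = 1 \<and> (\<forall>t\<ge>0. 0 < W t) \<and>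
     (\<forall>v s t. 0 \<le> s \<longrightarrow> s \<le> t \<longrightarrow> W s * qform (Q s v) \<le> W t * qform (Q t v))"

lemma linear_flow_weighted_increasing:
  fixes Q A :: "real \<Rightarrow> ('a::real_inner \<times> 'b::real_inner) \<Rightarrow>\<^sub>L ('a \<times> 'b)"
  assumes w_cont: "continuous_on {0..} w"
    and Q_deriv: "\<And>t. 0 \<le> t \<Longrightarrow> (Q has_vector_derivative A t o\<^sub>L Q t) (at t within {0..})"
    and A_cone: "\<And>t u. 0 \<le> t \<Longrightarrow>
       w t * qform u \<le> 2 * inner (fst u) (fst (A t u)) - 2 * inner (snd u) (snd (A t u))"
  shows "weighted_increasing (\<lambda>t. exp (- integral {0..t} w)) Q"
  unfolding weighted_increasing_def
proof (intro conjI allI impI)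
  fix v and s t :: real assume s: "0 \<le> s" "s \<le> t"
  have orbit_deriv: "((\<lambda>r. Q r v) has_vector_derivative A r (Q r v)) (at r within {0..})"
    if "0 \<le> r" for r
    using bounded_linear.has_vector_derivative[OF blinfun.bounded_linear_left Q_deriv[OF that], of v]
    by simp
  show "exp (- integral {0..s} w) * qform (Q s v) \<le> exp (- integral {0..t} w) * qform (Q t v)"
    by (rule exp_integral_weighted_increasing[OF w_cont qform_has_derivative[OF orbit_deriv] A_cone s])
qed auto

lemma weighted_increasing_lower_bound:
  assumes "weighted_increasing W Q" "Q 0 = id_blinfun" "0 \<le> t"
  shows "qform v \<le> W t * qform (Q t v)"
proof -
  have "W 0 * qform (Q 0 v) \<le> W t * qform (Q t v)"
    using assms unfolding weighted_increasing_def by blast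
  then show ?thesis using assms unfolding weighted_increasing_def by simp
qed

lemma weighted_increasing_backward:
  assumes W: "weighted_increasing W Q" and st: "0 \<le> s" "s \<le> t" and neg: "qform (Q t v) \<le> 0"
  shows "qform (Q s v) \<le> 0"
proof -
  have "W s * qform (Q s v) \<le> W t * qform (Q t v)"
    using W st unfolding weighted_increasing_def by blast
  moreover have "0 < W s" "0 < W t" using W st unfolding weighted_increasing_def by auto
  moreover have "W t * qform (Q t v) \<le> 0" using \<open>0 < W t\<close> neg by (simp add: mult_nonneg_nonpos)
  ultimately have "W s * qform (Q s v) \<le> 0" by linarith
  then show ?thesis using \<open>0 < W s\<close> by (simp add: mult_le_0_iff)
qed

lemma fst_block_solvable:
  fixes L :: "('a::euclidean_space \<times> 'b::real_normed_vector) \<Rightarrow>\<^sub>L ('a \<times> 'b)"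
  assumes inj: "\<And>a. fst (L (a, 0)) = 0 \<Longrightarrow> a = 0"
  shows "\<exists>a. fst (L (a, z)) = 0"
proof -
  define h where "h a = fst (L (a, 0))" for a
  have "bounded_linear (\<lambda>a. L (a, 0))"
    by (auto intro!: bounded_linear_compose[OF blinfun.bounded_linear_right] bounded_linear_Pair
        bounded_linear_zero bounded_linear_ident)
  then have h_lin: "linear h"
    unfolding h_def[abs_def] by (intro bounded_linear.linear bounded_linear_compose[OF bounded_linear_fst])
  have "inj h" using inj unfolding linear_inj_iff_eq_0[OF h_lin] h_def by blast
  then have "surj h" by (rule linear_inj_imp_surj[OF h_lin])
  then obtain a where a: "h a = - fst (L (0, z))" by (metis surjD)
  have "L (a, z) = L (a, 0) + L (0, z)"
    by (metis add.right_neutral add_Pair blinfun.add_right add.left_neutral)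
  then have "fst (L (a, z)) = h a + fst (L (0, z))" unfolding h_def by simp
  then show ?thesis using a by auto
qed

lemma fiber_exists:
  fixes Q :: "real \<Rightarrow> ('a::euclidean_space \<times> 'b::euclidean_space) \<Rightarrow>\<^sub>L ('a \<times> 'b)"
  assumes W: "weighted_increasing W Q" and Q0: "Q 0 = id_blinfun"
  shows "\<exists>a. \<forall>t\<ge>0. qform (Q t (a, z)) \<le> 0"
proof -
  have solvable: "\<exists>a. fst (Q t (a, z)) = 0" if t: "0 \<le> t" for t
  proof (rule fst_block_solvable)
    fix a assume "fst (Q t (a, 0)) = 0"
    then have "qform (Q t (a, 0)) \<le> 0" unfolding qform_def by simp
    moreover have "0 < W t" using W t unfolding weighted_increasing_def by auto
    ultimately have "W t * qform (Q t (a, 0)) \<le> 0" by (simp add: mult_nonneg_nonpos)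
    then have "qform (a, 0::'b) \<le> 0"
      using weighted_increasing_lower_bound[OF W Q0 t, of "(a, 0)"] by linarith
    then show "a = 0" unfolding qform_def by simp
  qed
  then have "\<forall>n::nat. \<exists>a. fst (Q (real n) (a, z)) = 0" by simp
  then obtain A where A: "\<And>n. fst (Q (real n) (A n, z)) = 0" by metis
  have A_good: "qform (Q s (A n, z)) \<le> 0" if "0 \<le> s" "s \<le> real n" for s n
    by (rule weighted_increasing_backward[OF W that]) (simp add: A qform_def)
  have "A n \<in> cball 0 (norm z)" for n
    using A_good[of 0 n] Q0 unfolding qform_def by (simp add: power2_le_iff_abs_le)
  then obtain l r where r: "strict_mono r" and lim: "(A \<circ> r) \<longlonglongrightarrow> l"
    using compact_imp_seq_compact[OF compact_cball] unfolding seq_compact_def by metis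
  have "qform (Q s (l, z)) \<le> 0" if s: "0 \<le> s" for s
  proof (rule LIMSEQ_le_const2)
    show "(\<lambda>n. qform (Q s ((A \<circ> r) n, z))) \<longlonglongrightarrow> qform (Q s (l, z))"
      unfolding qform_def by (intro tendsto_intros lim)
    show "\<exists>N. \<forall>n\<ge>N. qform (Q s ((A \<circ> r) n, z)) \<le> 0"
    proof (intro exI allI impI)
      fix n assume "nat \<lceil>s\<rceil> \<le> n"
      then have "s \<le> real (r n)" using seq_suble[OF r, of n] by linarith
      then show "qform (Q s ((A \<circ> r) n, z)) \<le> 0" using A_good s by simp
    qed
  qed
  then show ?thesis by blast
qed

(* Two points that stay in the negative cone separate exponentially slower than the cone allows:
   by the parallelogram law, q of half their difference, expanded at the relative rate
   exp (2 c t) of the two weights, is bounded by minus q of their midpoint. *)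
lemma negative_cone_separation:
  fixes Q :: "real \<Rightarrow> ('a::real_inner \<times> 'b::real_inner) \<Rightarrow>\<^sub>L ('a \<times> 'b)"
  assumes W: "\<And>e. \<bar>e\<bar> \<le> c \<Longrightarrow> weighted_increasing (\<lambda>t. exp (- (\<kappa> t + e * t))) Q"
    and c: "0 \<le> c" and Q0: "Q 0 = id_blinfun"
    and N1: "\<forall>t\<ge>0. qform (Q t v1) \<le> 0" and N2: "\<forall>t\<ge>0. qform (Q t v2) \<le> 0"
    and t: "0 \<le> t"
  shows "exp (2 * c * t) * qform ((1/2) *\<^sub>R (v2 - v1)) \<le> - qform ((1/2) *\<^sub>R (v1 + v2))"
proof -
  define m where "m = (1/2) *\<^sub>R (v1 + v2)"
  define d where "d = (1/2) *\<^sub>R (v2 - v1)"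
  define Wt where "Wt = exp (- (\<kappa> t + (- c) * t))"
  have Wt_pos: "0 < Wt" unfolding Wt_def by simp
  have "v2 = m + d" "v1 = m - d"
    unfolding m_def d_def by (simp_all add: algebra_simps flip: scaleR_2)
  then have split: "Q t v2 = Q t m + Q t d" "Q t v1 = Q t m - Q t d"
    by (simp_all add: blinfun.add_right blinfun.diff_right)
  have "Wt * qform (Q t v1) + Wt * qform (Q t v2) = 2 * (Wt * qform (Q t m)) + 2 * (Wt * qform (Q t d))"
    using arg_cong[OF qform_parallelogram[of "Q t m" "Q t d"], of "(*) Wt"]
    unfolding split by (simp add: algebra_simps)
  moreover have "Wt * qform (Q t v1) \<le> 0" "Wt * qform (Q t v2) \<le> 0"
    using N1 N2 t Wt_pos by (simp_all add: mult_nonneg_nonpos)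
  moreover have "qform m \<le> Wt * qform (Q t m)"
    using weighted_increasing_lower_bound[OF W Q0 t, of "- c"] c unfolding Wt_def by simp
  moreover have "exp (2 * c * t) * qform d \<le> Wt * qform (Q t d)"
  proof -
    have "qform d \<le> exp (- (\<kappa> t + c * t)) * qform (Q t d)"
      using weighted_increasing_lower_bound[OF W Q0 t, of c] c by simp
    moreover have "Wt = exp (2 * c * t) * exp (- (\<kappa> t + c * t))"
      unfolding Wt_def by (simp add: exp_add[symmetric])
    ultimately show ?thesis by (simp add: mult.assoc)
  qed
  ultimately show ?thesis unfolding m_def d_def by linarith
qed

(* Uniqueness of the point of T(x) on the fibre over z: the bound above is violated for large t,
   since q of half the difference of two points of one fibre is positive. *)
lemma fiber_unique:
  fixes Q :: "real \<Rightarrow> ('a::real_inner \<times> 'b::real_inner) \<Rightarrow>\<^sub>L ('a \<times> 'b)"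
  assumes W: "\<And>e. \<bar>e\<bar> \<le> c \<Longrightarrow> weighted_increasing (\<lambda>t. exp (- (\<kappa> t + e * t))) Q"
    and c: "0 < c" and Q0: "Q 0 = id_blinfun"
    and T1: "\<forall>t\<ge>0. qform (Q t (a1, z)) \<le> 0" and T2: "\<forall>t\<ge>0. qform (Q t (a2, z)) \<le> 0"
  shows "a1 = a2"
proof (rule ccontr)
  assume "a1 \<noteq> a2"
  define \<delta> where "\<delta> = qform ((1/2) *\<^sub>R ((a2, z) - (a1, z)))"
  define K where "K = (norm z)\<^sup>2"
  have \<delta>_pos: "0 < \<delta>" using \<open>a1 \<noteq> a2\<close> unfolding \<delta>_def qform_def by simp
  have midpoint: "- qform ((1/2) *\<^sub>R ((a1, z) + (a2, z))) \<le> K"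
    unfolding K_def qform_def by (simp add: scaleR_2 flip: scaleR_add_right)
  define t where "t = K / (2 * c * \<delta>)"
  have "0 \<le> t" unfolding t_def K_def using c \<delta>_pos by simp
  have "exp (2 * c * t) * \<delta> \<le> K"
    using negative_cone_separation[OF W less_imp_le[OF c] Q0 T1 T2 \<open>0 \<le> t\<close>] midpoint
    unfolding \<delta>_def by simp
  moreover have "1 + 2 * c * t \<le> exp (2 * c * t)" by (rule exp_ge_add_one_self)
  then have "\<delta> + K \<le> exp (2 * c * t) * \<delta>"
    using \<delta>_pos c unfolding t_def by (simp add: field_simps)
  ultimately show False using \<delta>_pos by linarith
qed

lemma unique_point_on_fiber:
  fixes Q :: "real \<Rightarrow> ('a::euclidean_space \<times> 'b::euclidean_space) \<Rightarrow>\<^sub>L ('a \<times> 'b)"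
  assumes W: "\<And>e. \<bar>e\<bar> \<le> c \<Longrightarrow> weighted_increasing (\<lambda>t. exp (- (\<kappa> t + e * t))) Q"
    and c: "0 < c" and Q0: "Q 0 = id_blinfun"
  shows "\<exists>!v. (\<forall>t\<ge>0. qform (Q t v) \<le> 0) \<and> snd v = z"
proof -
  obtain a where a: "\<forall>t\<ge>0. qform (Q t (a, z)) \<le> 0"
    using fiber_exists[OF W Q0, of 0 z] c by auto
  show ?thesis
  proof (rule ex1I[of _ "(a, z)"])
    show "(\<forall>t\<ge>0. qform (Q t (a, z)) \<le> 0) \<and> snd (a, z) = z" using a by simp
  next
    fix v assume v: "(\<forall>t\<ge>0. qform (Q t v) \<le> 0) \<and> snd v = z"
    then have "fst v = a" using fiber_unique[OF W c Q0, of "fst v" z a] a by (cases v) auto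
    then show "v = (a, z)" using v by (cases v) auto
  qed
qed

lemma variational_weighted_increasing:
  fixes Q :: "real \<Rightarrow> ('a::real_inner \<times> 'b::real_inner) \<Rightarrow>\<^sub>L ('a \<times> 'b)"
    and Df :: "'a \<times> 'b \<Rightarrow> ('a \<times> 'b) \<Rightarrow>\<^sub>L 'a" and Dg :: "'a \<times> 'b \<Rightarrow> ('a \<times> 'b) \<Rightarrow>\<^sub>L 'b"
  assumes y_cont: "continuous_on {0..} y" and y_U: "\<And>t. 0 \<le> t \<Longrightarrow> y t \<in> U"
    and k_cont: "continuous_on U k"
    and Q_deriv: "\<And>t. 0 \<le> t \<Longrightarrow>
       (Q has_vector_derivative Blinfun (\<lambda>v. (Df (y t) v, Dg (y t) v)) o\<^sub>L Q t) (at t within {0..})"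
    and cone_est: "\<And>u v. u \<in> U \<Longrightarrow>
       (k u + e) * qform v \<le> 2 * inner (fst v) (Df u v) - 2 * inner (snd v) (Dg u v)"
  shows "weighted_increasing (\<lambda>t. exp (- (integral {0..t} (\<lambda>r. k (y r)) + e * t))) Q"
proof -
  have ky_cont: "continuous_on {0..} (\<lambda>r. k (y r))"
    by (rule continuous_on_compose2[OF k_cont y_cont]) (auto simp: y_U)
  have "weighted_increasing (\<lambda>t. exp (- integral {0..t} (\<lambda>r. k (y r) + e))) Q"
  proof (rule linear_flow_weighted_increasing[OF _ Q_deriv])
    show "continuous_on {0..} (\<lambda>r. k (y r) + e)" using ky_cont by (intro continuous_intros)
  next
    fix t u assume "0 \<le> (t::real)"
    moreover have "bounded_linear (\<lambda>v. (Df (y t) v, Dg (y t) v))"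
      by (intro bounded_linear_Pair blinfun.bounded_linear_right)
    ultimately show "(k (y t) + e) * qform u \<le>
        2 * inner (fst u) (fst (Blinfun (\<lambda>v. (Df (y t) v, Dg (y t) v)) u))
        - 2 * inner (snd u) (snd (Blinfun (\<lambda>v. (Df (y t) v, Dg (y t) v)) u))"
      using cone_est[OF y_U] by (simp add: bounded_linear_Blinfun_apply)
  qed
  moreover have "integral {0..t} (\<lambda>r. k (y r) + e) = integral {0..t} (\<lambda>r. k (y r)) + e * t"
    if "0 \<le> t" for t
    using that continuous_on_subset[OF ky_cont, of "{0..t}"]
    by (simp add: integral_add integrable_continuous_interval)
  ultimately show ?thesis unfolding weighted_increasing_def by auto
qed

theorem lemma2p9:
  fixes f :: "(real^'n) \<times> (real^'m) \<Rightarrow> (real^'n)"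
    and g :: "(real^'n) \<times> (real^'m) \<Rightarrow> (real^'m)"
    and Df :: "(real^'n) \<times> (real^'m) \<Rightarrow> ((real^'n) \<times> (real^'m)) \<Rightarrow>\<^sub>L (real^'n)"
    and Dg :: "(real^'n) \<times> (real^'m) \<Rightarrow> ((real^'n) \<times> (real^'m)) \<Rightarrow>\<^sub>L (real^'m)"
    and U \<Gamma> :: "((real^'n) \<times> (real^'m)) set"
    and \<alpha> ell :: "(real^'n) \<times> (real^'m) \<Rightarrow> real"
    and c1 d :: real
    and \<Phi> :: "real \<Rightarrow> (real^'n) \<times> (real^'m) \<Rightarrow> (real^'n) \<times> (real^'m)"
    and Q :: "real \<Rightarrow> (real^'n) \<times> (real^'m) \<Rightarrow> ((real^'n) \<times> (real^'m)) \<Rightarrow>\<^sub>L ((real^'n) \<times> (real^'m))"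
  assumes H1_open: "open U" and H1_convex: "convex U"
    and H1_d: "d > 0" and H1_cone: "\<forall>x\<in>U. cone x \<inter> U \<subseteq> boxB d x"
    and H2_f_deriv: "\<forall>x\<in>U. (f has_derivative blinfun_apply (Df x)) (at x)"
    and H2_g_deriv: "\<forall>x\<in>U. (g has_derivative blinfun_apply (Dg x)) (at x)"
    and H2_Df_cont: "continuous_on U Df" and H2_Dg_cont: "continuous_on U Dg"
    and H2_alpha_cont: "continuous_on U \<alpha>" and H2_ell_cont: "continuous_on U ell"
    and H2_alpha_pos: "\<forall>x\<in>U. \<alpha> x > 0" and H2_ell_nonneg: "\<forall>x\<in>U. ell x \<ge> 0"
    and H2_c1: "c1 > 0"
    and H2_a: "\<forall>x\<in>U. \<forall>a'. inner a' (Df x (a', 0)) \<ge> \<alpha> x * (norm a')\<^sup>2"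
    and H2_z: "\<forall>x\<in>U. \<forall>z'. inner z' (Dg x (0, z')) \<le> ell x * (norm z')\<^sup>2"
    and H2_dom: "\<forall>x\<in>U. \<alpha> x \<ge> ell x + onorm (\<lambda>z'. Df x (0, z')) + onorm (\<lambda>a'. Dg x (a', 0)) + c1"
    and H3_sub: "\<Gamma> \<subseteq> U"
    and H3_proj: "snd ` \<Gamma> = snd ` U"
    and flow: "\<forall>x\<in>\<Gamma>. \<Phi> 0 x = x \<and> (\<forall>t\<ge>0. \<Phi> t x \<in> \<Gamma> \<and>
        ((\<lambda>s. \<Phi> s x) has_vector_derivative (f (\<Phi> t x), g (\<Phi> t x))) (at t within {0..}))"
    and fundamental: "\<forall>x\<in>\<Gamma>. Q 0 x = id_blinfun \<and> (\<forall>t\<ge>0.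
        ((\<lambda>s. Q s x) has_vector_derivative
           (Blinfun (\<lambda>v. (Df (\<Phi> t x) v, Dg (\<Phi> t x) v)) o\<^sub>L Q t x)) (at t within {0..}))"
  shows "\<forall>x\<in>\<Gamma>. \<forall>zz::real^'m. \<exists>!v. v \<in> Tset Q x \<inter> fiber zz"
proof (intro ballI allI)
  fix x and zz :: "real^'m" assume x: "x \<in> \<Gamma>"
  have orbit_U: "\<Phi> t x \<in> U" if "0 \<le> t" for t using flow x H3_sub that by blast
  have orbit_cont: "continuous_on {0..} (\<lambda>t. \<Phi> t x)"
    unfolding continuous_on_eq_continuous_within
    using flow x has_vector_derivative_continuous by fastforce
  have weights: "weighted_increasing
      (\<lambda>t. exp (- (integral {0..t} (\<lambda>r. \<alpha> (\<Phi> r x) + ell (\<Phi> r x)) + e * t))) (\<lambda>t. Q t x)"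
    if e: "\<bar>e\<bar> \<le> c1" for e
  proof (rule variational_weighted_increasing[OF orbit_cont orbit_U])
    show "continuous_on U (\<lambda>u. \<alpha> u + ell u)" using H2_alpha_cont H2_ell_cont by (rule continuous_on_add)
    show "((\<lambda>s. Q s x) has_vector_derivative Blinfun (\<lambda>v. (Df (\<Phi> t x) v, Dg (\<Phi> t x) v)) o\<^sub>L Q t x)
        (at t within {0..})" if "0 \<le> t" for t
      using fundamental x that by blast
    show "(\<alpha> u + ell u + e) * qform v \<le> 2 * inner (fst v) (Df u v) - 2 * inner (snd v) (Dg u v)"
      if "u \<in> U" for u v
      using cone_derivative_estimate[where F = "Df u" and G = "Dg u" and al = "\<alpha> u" and el = "ell u"
          and c = c1 and a = "fst v" and z = "snd v"]
        H2_a H2_z H2_dom e that by simp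
  qed
  have "\<exists>!v. (\<forall>t\<ge>0. qform (Q t x v) \<le> 0) \<and> snd v = zz"
    using unique_point_on_fiber[OF weights H2_c1] fundamental x by blast
  then show "\<exists>!v. v \<in> Tset Q x \<inter> fiber zz" by (simp add: Tset_iff fiber_iff)
qed

end
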